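(* Let $f$ be an LLD meromorphic function on $\mathbb{C}$ whose divisor $\mathrm{Div}(f)=\sum_\rho n_\rho(f)\cdot(\rho)$ has exponent of convergence $\alpha>0$. Let $D$ be the divisor $D=-\sum_\rho\sum_{k\ge0} n_\rho(f)\cdot(\rho-k)$, i.e. $n_\rho(D)=-\sum_{k\ge 0} n_{\rho+k}(f)$. Then $D$ is LLD and has exponent of convergence $\alpha+1$.
   Context: $\mathbb{C}_+=\{\Re s>0\}$; $n_\rho(h)$ denotes the order of the meromorphic function $h$ at $\rho$ (positive for zeros, negative for poles), and $\mathrm{Div}(h)=\sum_\rho n_\rho(h)\cdot(\rho)$. A function is LLD if it has no zeros nor poles in $\mathbb{C}_+$; a divisor is LLD if its support lies in $\{\Re s\le 0\}$. A divisor $D=\sum_\rho n_\rho\cdot(\rho)$ has exponent of convergence $\alpha>0$ if $\|D\|_\alpha=\sum_{\rho\neq0}|n_\rho|\,|\rho|^{-\alpha}<+\infty$. (Note $n_{\rho+k}(f)=0$ once $\rho+k\in\mathbb{C}_+$, so the sums defining $n_\rho(D)$ are finite.) *)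

theory Defs
  imports "HOL-Complex_Analysis.Complex_Analysis"
begin

definition divisor_of :: "(complex \<Rightarrow> complex) \<Rightarrow> complex \<Rightarrow> int" where
  "divisor_of f = (\<lambda>\<rho>. zorder f \<rho>)"

definition LLD_fun :: "(complex \<Rightarrow> complex) \<Rightarrow> bool" where
  "LLD_fun f \<longleftrightarrow> (\<forall>s. 0 < Re s \<longrightarrow> zorder f s = 0)"

definition LLD_div :: "(complex \<Rightarrow> int) \<Rightarrow> bool" where
  "LLD_div D \<longleftrightarrow> (\<forall>\<rho>. D \<rho> \<noteq> 0 \<longrightarrow> Re \<rho> \<le> 0)"

definition has_exp_conv :: "(complex \<Rightarrow> int) \<Rightarrow> real \<Rightarrow> bool" where
  "has_exp_conv D \<alpha> \<longleftrightarrow>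
     (\<lambda>\<rho>. real_of_int \<bar>D \<rho>\<bar> * norm \<rho> powr (-\<alpha>)) summable_on (UNIV - {0})"

text \<open>The divisor D with n_rho(D) = - sum_{k>=0} n_{rho+k}(f); the sum is over the
  (finite, for LLD f) set of k with nonzero term.\<close>
definition shifted_divisor :: "(complex \<Rightarrow> complex) \<Rightarrow> complex \<Rightarrow> int" where
  "shifted_divisor f \<rho> =
     - (\<Sum>k\<in>{k::nat. divisor_of f (\<rho> + of_nat k) \<noteq> 0}. divisor_of f (\<rho> + of_nat k))"

end

theory Submission
  imports Defs
begin

text \<open>Writing \<open>s = \<rho> + k\<close>, the series of \<open>|n\<^sub>\<rho>(D)| |\<rho>|^-(\<alpha>+1)\<close> is dominated by the double
  series of \<open>|n\<^sub>s(f)| |s - k|^-(\<alpha>+1)\<close> over \<open>s\<close> and \<open>k \<ge> 0\<close>. On the support of the divisor of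
  \<open>f\<close> we have \<open>Re s \<le> 0\<close>, hence \<open>|s - k| \<ge> max |s| k\<close>, and comparison with a telescoping sum
  bounds the inner sum over \<open>k\<close> by \<open>|s|^-(\<alpha>+1) + C\<^sub>\<alpha> (max |s| 1)^-\<alpha>\<close>. Weighted by \<open>|n\<^sub>s(f)|\<close>
  this is summable: for \<open>|s| > 1\<close> by the convergence exponent \<open>\<alpha>\<close> of \<open>f\<close>'s divisor, and in
  the unit disc because \<open>f\<close> has only finitely many zeros and poles there.\<close>

lemma powr_neg_diff_ge:
  fixes x a :: real
  assumes x: "x > 0" and a: "a > 0"
  shows "a * (x + 1) powr -(a + 1) \<le> x powr -a - (x + 1) powr -a"
proof -
  define y where "y = x + 1"
  define u where "u = y / x"
  have y: "y > 0" and u: "u > 0"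
    using x by (simp_all add: y_def u_def)
  have "1 / y \<le> ln u"
    using ln_le_minus_one[of "x / y"] x y by (simp add: u_def ln_div y_def field_simps)
  then have "1 + a / y \<le> 1 + a * ln u"
    using mult_left_mono[of "1 / y" "ln u" a] a by simp
  also have "\<dots> \<le> u powr a"
    using u exp_ge_add_one_self[of "a * ln u"] by (simp add: powr_def)
  finally have "y powr -a * (1 + a / y) \<le> y powr -a * u powr a"
    by (simp add: mult_left_mono)
  also have "\<dots> = x powr -a"
    using x y by (simp add: u_def powr_divide powr_minus field_simps)
  moreover have "y powr -(a + 1) = y powr -a / y"
    using y powr_diff[of y "-a" 1] by simp
  ultimately show ?thesis
    unfolding y_def [symmetric] by (simp add: field_simps)
qed

lemma sum_powr_shift_le:
  fixes r a :: real
  assumes r: "r > 0" and a: "a > 0"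
  shows "(\<Sum>k<N. (r + real k + 1) powr -(a + 1)) \<le> r powr -a / a"
proof -
  define g where "g k = (r + real k) powr -a / a" for k
  have "(\<Sum>k<N. (r + real k + 1) powr -(a + 1)) \<le> (\<Sum>k<N. g k - g (Suc k))"
    using powr_neg_diff_ge[of "r + real _" a] r a
    by (intro sum_mono) (simp add: g_def add_ac field_simps)
  also have "\<dots> = g 0 - g N"
    by (rule sum_lessThan_telescope')
  also have "\<dots> \<le> r powr -a / a"
    using a by (simp add: g_def)
  finally show ?thesis .
qed

lemma norm_diff_of_nat_ge:
  fixes s :: complex
  assumes "Re s \<le> 0"
  shows "max (norm s) (real k) \<le> norm (s - of_nat k)"
proof -
  have "\<bar>Re s\<bar> \<le> \<bar>Re (s - of_nat k)\<bar>"
    using assms by simp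
  then have "norm s \<le> norm (s - of_nat k)"
    unfolding cmod_def abs_le_square_iff by (simp add: real_sqrt_le_mono)
  moreover have "real k \<le> norm (s - of_nat k)"
    using assms abs_Re_le_cmod[of "s - of_nat k"] by simp
  ultimately show ?thesis by simp
qed

text \<open>For \<open>s = 0\<close> the first summand of the bound is \<open>0 powr _ = 0\<close>.\<close>

lemma sum_norm_diff_powr_le:
  fixes s :: complex and a :: real
  assumes s: "Re s \<le> 0" and a: "a > 0"
  shows "(\<Sum>k\<le>N. norm (s - of_nat k) powr -(a + 1))
           \<le> norm s powr -(a + 1) + 2 powr (a + 1) / a * max (norm s) 1 powr -a"
proof -
  define R where "R = max (norm s) 1"
  have R: "R \<ge> 1" by (simp add: R_def)
  have term_le:
    "norm (s - of_nat (Suc k)) powr -(a + 1) \<le> 2 powr (a + 1) * (R + real k + 1) powr -(a + 1)"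
    for k
  proof -
    define d where "d = norm (s - of_nat (Suc k))"
    have "norm s \<le> d" "real k + 1 \<le> d"
      using norm_diff_of_nat_ge[OF s, of "Suc k"] by (simp_all add: d_def)
    moreover have "R = 1 \<or> R = norm s"
      by (simp add: R_def max_def)
    ultimately have le: "(R + real k + 1) / 2 \<le> d"
      using of_nat_0_le_iff[of k, where 'a=real] by argo
    have pos: "0 < (R + real k + 1) / 2"
      using R of_nat_0_le_iff[of k, where 'a=real] by (intro divide_pos_pos) linarith+
    have "d powr -(a + 1) \<le> ((R + real k + 1) / 2) powr -(a + 1)"
      by (rule powr_mono2'[OF _ pos le]) (use a in linarith)
    also have "\<dots> = (R + real k + 1) powr -(a + 1) / 2 powr -(a + 1)"
      by (rule powr_divide)
    also have "\<dots> = 2 powr (a + 1) * (R + real k + 1) powr -(a + 1)"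
      unfolding powr_minus[of 2 "a + 1"] by (simp add: divide_inverse)
    finally show ?thesis
      unfolding d_def .
  qed
  have "(\<Sum>k\<le>N. norm (s - of_nat k) powr -(a + 1))
          = norm s powr -(a + 1) + (\<Sum>k<N. norm (s - of_nat (Suc k)) powr -(a + 1))"
    by (simp add: sum.atMost_shift)
  also have "\<dots> \<le> norm s powr -(a + 1)
                   + 2 powr (a + 1) * (\<Sum>k<N. (R + real k + 1) powr -(a + 1))"
    using term_le by (simp add: sum_distrib_left sum_mono)
  also have "\<dots> \<le> norm s powr -(a + 1) + 2 powr (a + 1) * (R powr -a / a)"
    using sum_powr_shift_le[of R a N] a R by (intro add_left_mono mult_left_mono) auto
  finally show ?thesis by (simp add: R_def)
qed

lemma meromorphic_eventually_nonzero_cosparse: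
  assumes mero: "f meromorphic_on A" and A: "open A" "connected A" "z \<in> A"
    and nonzero: "\<exists>\<^sub>F w in at z. f w \<noteq> 0"
  shows "eventually (\<lambda>w. f w \<noteq> 0) (cosparse A)"
proof -
  have "\<not> eventually (\<lambda>w. f w = 0) (cosparse A)"
    using eventually_cosparse_imp_eventually_at[of _ A z UNIV] nonzero \<open>z \<in> A\<close>
    by (auto simp: frequently_def)
  then show ?thesis
    using meromorphic_imp_constant_or_avoid[OF mero A(1,2), of 0] by blast
qed

lemma eventually_zorder_eq_0_cosparse:
  assumes mero: "f meromorphic_on A" and A: "open A"
    and nonzero: "eventually (\<lambda>w. f w \<noteq> 0) (cosparse A)"
  shows "eventually (\<lambda>z. zorder f z = 0) (cosparse A)"
proof -
  have "eventually (\<lambda>z. z \<in> A) (cosparse A)"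
    using A by (simp add: eventually_in_cosparse)
  with meromorphic_on_imp_not_pole_cosparse[OF mero] meromorphic_on_imp_not_zero_cosparse[OF mero]
  show ?thesis
  proof eventually_elim
    case (elim z)
    have "eventually (\<lambda>w. f w \<noteq> 0) (at z)"
      using eventually_cosparse_imp_eventually_at[OF nonzero \<open>z \<in> A\<close>] by simp
    then show ?case
      using elim meromorphic_on_subset[OF mero, of "{z}"]
      by (intro not_pole_not_isolated_zero_imp_zorder_eq_0) (auto intro: eventually_frequently)
  qed
qed

lemma finite_zorder_nonzero_compact:
  assumes mero: "f meromorphic_on UNIV" and nonzero: "\<exists>z. \<exists>\<^sub>F w in at z. f w \<noteq> 0"
    and K: "compact K"
  shows "finite {z \<in> K. zorder f z \<noteq> 0}"
proof -
  have "eventually (\<lambda>z. zorder f z = 0) (cosparse UNIV)"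
    using nonzero meromorphic_eventually_nonzero_cosparse[OF mero]
    by (auto intro: eventually_zorder_eq_0_cosparse[OF mero open_UNIV])
  then have "{z. zorder f z \<noteq> 0} sparse_in K"
    by (auto simp: eventually_cosparse intro: sparse_in_subset)
  then have "finite (K \<inter> {z. zorder f z \<noteq> 0})"
    using K by (rule sparse_in_compact_finite)
  then show ?thesis
    by (rule finite_subset[rotated]) auto
qed

lemma LLD_div_divisor_of: "LLD_fun f \<Longrightarrow> LLD_div (divisor_of f)"
  unfolding LLD_fun_def LLD_div_def divisor_of_def by (meson not_le)

definition ray_sum :: "(complex \<Rightarrow> int) \<Rightarrow> complex \<Rightarrow> int" where
  "ray_sum n \<rho> = (\<Sum>k | n (\<rho> + of_nat k) \<noteq> 0. n (\<rho> + of_nat k))"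

lemma shifted_divisor_eq_neg_ray_sum: "shifted_divisor f = (\<lambda>\<rho>. - ray_sum (divisor_of f) \<rho>)"
  by (simp add: fun_eq_iff shifted_divisor_def ray_sum_def)

lemma ray_sum_eq_sum_atMost:
  assumes n: "LLD_div n" and N: "- Re \<rho> \<le> real N"
  shows "ray_sum n \<rho> = (\<Sum>k\<le>N. n (\<rho> + of_nat k))"
proof -
  have "{k. n (\<rho> + of_nat k) \<noteq> 0} \<subseteq> {..N}"
  proof
    fix k assume "k \<in> {k. n (\<rho> + of_nat k) \<noteq> 0}"
    then have "Re \<rho> + real k \<le> 0"
      using n by (auto simp: LLD_div_def)
    with N show "k \<in> {..N}" by simp
  qed
  then show ?thesis
    unfolding ray_sum_def by (intro sum.mono_neutral_left) auto
qed

lemma LLD_div_neg_ray_sum: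
  assumes n: "LLD_div n"
  shows "LLD_div (\<lambda>\<rho>. - ray_sum n \<rho>)"
  unfolding LLD_div_def
proof (intro allI impI)
  fix \<rho> assume nonzero: "- ray_sum n \<rho> \<noteq> 0"
  show "Re \<rho> \<le> 0"
  proof (rule ccontr)
    assume "\<not> Re \<rho> \<le> 0"
    then have "ray_sum n \<rho> = n \<rho>"
      using ray_sum_eq_sum_atMost[OF n, of \<rho> 0] by simp
    with nonzero n \<open>\<not> Re \<rho> \<le> 0\<close> show False
      by (auto simp: LLD_div_def)
  qed
qed

lemma sum_abs_ray_sum_le_infsum:
  fixes n :: "complex \<Rightarrow> int" and w B :: "complex \<Rightarrow> real"
  assumes n: "LLD_div n" and F: "finite F" and w: "\<And>s. w s \<ge> 0"
    and B: "\<And>s N. n s \<noteq> 0 \<Longrightarrow> (\<Sum>k\<le>N. w (s - of_nat k)) \<le> B s"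
    and summable: "(\<lambda>s. \<bar>n s\<bar> * B s) summable_on UNIV"
  shows "(\<Sum>\<rho>\<in>F. \<bar>ray_sum n \<rho>\<bar> * w \<rho>) \<le> (\<Sum>\<^sub>\<infinity>s. \<bar>n s\<bar> * B s)"
proof -
  obtain M where M: "\<And>\<rho>. \<rho> \<in> F \<Longrightarrow> - Re \<rho> \<le> M"
    using bdd_above_finite[OF finite_imageI[OF F, of "\<lambda>\<rho>. - Re \<rho>"]]
    by (auto simp: bdd_above_def)
  define N where "N = nat \<lceil>M\<rceil>"
  have N: "- Re \<rho> \<le> real N" if "\<rho> \<in> F" for \<rho>
    using M[OF that] real_nat_ceiling_ge[of M] by (simp add: N_def)
  define T where "T = (\<Union>k\<le>N. (\<lambda>\<rho>. \<rho> + of_nat k) ` F)"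
  have T: "finite T"
    using F by (simp add: T_def)
  have weight_le: "\<bar>n s\<bar> * (\<Sum>k\<le>N'. w (s - of_nat k)) \<le> \<bar>n s\<bar> * B s" for s N'
    using B by (cases "n s = 0") (auto intro: mult_left_mono)
  have nonneg: "0 \<le> \<bar>n s\<bar> * B s" for s
    using order_trans[OF _ weight_le[of s 0]] w[of s] by simp
  have "(\<Sum>\<rho>\<in>F. \<bar>ray_sum n \<rho>\<bar> * w \<rho>) \<le> (\<Sum>\<rho>\<in>F. (\<Sum>k\<le>N. \<bar>n (\<rho> + of_nat k)\<bar>) * w \<rho>)"
    using ray_sum_eq_sum_atMost[OF n N] w
    by (intro sum_mono mult_right_mono) (auto simp: sum_abs)
  also have "\<dots> = (\<Sum>k\<le>N. \<Sum>\<rho>\<in>F. \<bar>n (\<rho> + of_nat k)\<bar> * w ((\<rho> + of_nat k) - of_nat k))"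
    by (simp add: sum_distrib_right sum.swap[of _ F])
  also have "\<dots> = (\<Sum>k\<le>N. \<Sum>s\<in>(\<lambda>\<rho>. \<rho> + of_nat k) ` F. \<bar>n s\<bar> * w (s - of_nat k))"
    by (simp add: sum.reindex inj_on_def)
  also have "\<dots> \<le> (\<Sum>k\<le>N. \<Sum>s\<in>T. \<bar>n s\<bar> * w (s - of_nat k))"
    using T w by (intro sum_mono sum_mono2) (auto simp: T_def)
  also have "\<dots> = (\<Sum>s\<in>T. \<bar>n s\<bar> * (\<Sum>k\<le>N. w (s - of_nat k)))"
    by (simp add: sum_distrib_left sum.swap[of _ T])
  also have "\<dots> \<le> (\<Sum>s\<in>T. \<bar>n s\<bar> * B s)"
    by (intro sum_mono weight_le)
  also have "\<dots> \<le> (\<Sum>\<^sub>\<infinity>s. \<bar>n s\<bar> * B s)"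
    using summable T nonneg by (intro finite_sum_le_infsum) auto
  finally show ?thesis .
qed

lemma has_exp_conv_neg_ray_sum:
  assumes n: "LLD_div n" and \<alpha>: "\<alpha> > 0" and conv: "has_exp_conv n \<alpha>"
    and finite_near_0: "finite {s. n s \<noteq> 0 \<and> norm s \<le> 1}"
  shows "has_exp_conv (\<lambda>\<rho>. - ray_sum n \<rho>) (\<alpha> + 1)"
proof -
  define c where "c = 2 powr (\<alpha> + 1) / \<alpha>"
  define B where "B s = norm (s :: complex) powr -(\<alpha> + 1) + c * max (norm s) 1 powr -\<alpha>" for s
  have c: "c \<ge> 0"
    using \<alpha> by (simp add: c_def)
  have B_bound: "(\<Sum>k\<le>N. norm (s - of_nat k) powr -(\<alpha> + 1)) \<le> B s" if "n s \<noteq> 0" for s N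
    using sum_norm_diff_powr_le[of s \<alpha> N] n that \<alpha> by (simp add: B_def c_def LLD_div_def)
  have "(\<lambda>s. \<bar>n s\<bar> * B s) summable_on {s. 1 < norm s}"
  proof (rule summable_on_comparison_test)
    show "(\<lambda>s. (1 + c) * (\<bar>n s\<bar> * norm s powr -\<alpha>)) summable_on {s. 1 < norm s}"
      using conv unfolding has_exp_conv_def
      by (intro summable_on_cmult_right) (auto elim: summable_on_subset)
    fix s :: complex assume s: "s \<in> {s. 1 < norm s}"
    then have "norm s powr -(\<alpha> + 1) \<le> norm s powr -\<alpha>"
      by (intro powr_mono) auto
    then have "B s \<le> (1 + c) * norm s powr -\<alpha>"
      using s by (simp add: B_def algebra_simps)
    then have "\<bar>n s\<bar> * B s \<le> \<bar>n s\<bar> * ((1 + c) * norm s powr -\<alpha>)"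
      by (intro mult_left_mono) auto
    then show "\<bar>n s\<bar> * B s \<le> (1 + c) * (\<bar>n s\<bar> * norm s powr -\<alpha>)"
      by (simp only: mult.left_commute)
    show "0 \<le> \<bar>n s\<bar> * B s"
      using c by (simp add: B_def)
  qed
  moreover have "(\<lambda>s. \<bar>n s\<bar> * B s) summable_on {s. norm s \<le> 1}
      \<longleftrightarrow> (\<lambda>s. \<bar>n s\<bar> * B s) summable_on {s. n s \<noteq> 0 \<and> norm s \<le> 1}"
    by (rule summable_on_cong_neutral) auto
  with finite_near_0 have "(\<lambda>s. \<bar>n s\<bar> * B s) summable_on {s. norm s \<le> 1}"
    by simp
  ultimately have "(\<lambda>s. \<bar>n s\<bar> * B s) summable_on ({s. 1 < norm s} \<union> {s. norm s \<le> 1})"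
    by (rule summable_on_union)
  moreover have "{s. 1 < norm s} \<union> {s. norm s \<le> 1} = (UNIV :: complex set)"
    by auto
  ultimately have summable: "(\<lambda>s. \<bar>n s\<bar> * B s) summable_on UNIV"
    by simp
  have "(\<Sum>\<rho>\<in>F. \<bar>- ray_sum n \<rho>\<bar> * norm \<rho> powr -(\<alpha> + 1)) \<le> (\<Sum>\<^sub>\<infinity>s. \<bar>n s\<bar> * B s)"
    if "finite F" for F
    using sum_abs_ray_sum_le_infsum[OF n that _ B_bound summable] by simp
  then show ?thesis
    unfolding has_exp_conv_def
    by (intro nonneg_bdd_above_summable_on bdd_aboveI) auto
qed

theorem proposition2p5:
  fixes f :: "complex \<Rightarrow> complex" and \<alpha> :: real
  assumes "f meromorphic_on UNIV"
    and "\<exists>z. \<exists>\<^sub>F w in at z. f w \<noteq> 0"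
    and "LLD_fun f"
    and "\<alpha> > 0"
    and "has_exp_conv (divisor_of f) \<alpha>"
  shows "LLD_div (shifted_divisor f) \<and> has_exp_conv (shifted_divisor f) (\<alpha> + 1)"
proof -
  have LLD: "LLD_div (divisor_of f)"
    using assms(3) by (rule LLD_div_divisor_of)
  have "finite {z \<in> cball 0 1. zorder f z \<noteq> 0}"
    using assms(1,2) by (rule finite_zorder_nonzero_compact) simp
  then have "finite {s. divisor_of f s \<noteq> 0 \<and> norm s \<le> 1}"
    by (rule finite_subset[rotated]) (auto simp: divisor_of_def)
  then show ?thesis
    unfolding shifted_divisor_eq_neg_ray_sum
    using LLD_div_neg_ray_sum[OF LLD] has_exp_conv_neg_ray_sum[OF LLD assms(4,5)] by blast
qed

end
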